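(* Let $\mathbf{p}:[0,1]\to[0,1]^E$, $\lambda\mapsto\mathbf{p}(\lambda)$, be continuous, and set $\rho(\lambda):=\rho\big(B^T\mathrm{diag}(\mathbf{p}(\lambda))\big)$. Suppose a continuous phase transition occurs at $\lambda_c\in[0,1)$, i.e. $\mathbf{Q}(\mathbf{p}(\lambda))\to\mathbf{1}$ as $\lambda\to\lambda_c$, and there is a sequence $\lambda_n\to\lambda_c$ with $\mathbf{Q}(\mathbf{p}(\lambda_n))\neq\mathbf{1}$ for all $n$. Then $\rho(\lambda_c)\geq 1$.
   Context: $\mathcal{G}=(V,E)$ is a finite directed graph, edges written $i\to j$, $M=|E|$; $\mathcal{N}^-(j)=\{k:\,k\to j\in E\}$ is the set of predecessors of $j$. The Hashimoto matrix is $B_{i\to j,\,k\to l}=\delta_{jk}(1-\delta_{il})$, $\rho$ denotes spectral radius. For $\mathbf{p}\in[0,1]^E$ define $\mathbf{F}(\cdot;\mathbf{p}):[0,1]^E\to[0,1]^E$ componentwise: for the edge $j\to i$, $$F_{j\to i}(\mathbf{y};\mathbf{p})=\prod_{k\in\mathcal{N}^-(j)\setminus\{i\}}\big(1-p_{k\to j}+p_{k\to j}\,y_{k\to j}\big)$$ (empty product $=1$). One checks that the Jacobian at $\mathbf{1}$ is $\mathbf{F}'(\mathbf{1};\mathbf{p})=B^T\mathrm{diag}(\mathbf{p})$. $\mathbf{Q}(\mathbf{p})\in[0,1]^E$ denotes the componentwise smallest fixed point of $\mathbf{F}(\cdot;\mathbf{p})$ in $[0,1]^E$ (the limit of the iterates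 of $\mathbf{F}$ started at $\mathbf{0}$); its component for edge $j\to i$ is the message-passing probability that the cluster obtained by backtracking the edge $j\to i$ is finite. *)

theory Defs
  imports "Jordan_Normal_Form.Spectral_Radius"
begin

text \<open>Directed graph given by a finite edge set E of pairs (i,j), meaning i \<rightarrow> j.
  Vectors in [0,1]^E are functions on pairs; only values on E matter.\<close>

definition edge_list :: "('v \<times> 'v) set \<Rightarrow> ('v \<times> 'v) list" where
  "edge_list E = (SOME xs. distinct xs \<and> set xs = E)"

definition hashimoto :: "('v \<times> 'v) set \<Rightarrow> real mat" where
  "hashimoto E = (let es = edge_list E in
     mat (length es) (length es)
       (\<lambda>(a, b). (case es ! a of (i, j) \<Rightarrow> case es ! b of (k, l) \<Rightarrow>
                    if j = k \<and> i \<noteq> l then 1 else 0)))"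

definition diag_edges :: "('v \<times> 'v) set \<Rightarrow> ('v \<times> 'v \<Rightarrow> real) \<Rightarrow> real mat" where
  "diag_edges E p = (let es = edge_list E in
     mat (length es) (length es) (\<lambda>(a, b). if a = b then p (es ! a) else 0))"

definition rho_B :: "('v \<times> 'v) set \<Rightarrow> ('v \<times> 'v \<Rightarrow> real) \<Rightarrow> real" where
  "rho_B E p = spectral_radius
     (map_mat complex_of_real (transpose_mat (hashimoto E) * diag_edges E p))"

definition F_mp :: "('v \<times> 'v) set \<Rightarrow> ('v \<times> 'v \<Rightarrow> real) \<Rightarrow> ('v \<times> 'v \<Rightarrow> real) \<Rightarrow> ('v \<times> 'v \<Rightarrow> real)" where
  "F_mp E p y = (\<lambda>(j, i). \<Prod>k \<in> {k. (k, j) \<in> E} - {i}.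
       (1 - p (k, j) + p (k, j) * y (k, j)))"

text \<open>Q(p): smallest fixed point of F(.;p) in [0,1]^E, the limit of the iterates of F
  started at 0.\<close>
definition Q_mp :: "('v \<times> 'v) set \<Rightarrow> ('v \<times> 'v \<Rightarrow> real) \<Rightarrow> ('v \<times> 'v \<Rightarrow> real)" where
  "Q_mp E p = (\<lambda>e. lim (\<lambda>n. ((F_mp E p) ^^ n) (\<lambda>_. 0) e))"

end

(* Suppose \<rho>(\<lambda>c) < 1. Then some power J(\<lambda>c)^K of the Jacobian J = B^T diag(p) has all
   entries below 1/|E|, and by continuity of p so has J(\<lambda>n)^K for large n. On the other
   hand the Weierstrass inequality 1 - \<Prod>(1 - x_k) \<le> \<Sum> x_k, applied to the fixed-point
   equation Q = F(Q), shows that v = 1 - Q \<ge> 0 satisfies v \<le> J v, hence v \<le> J^K v, which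
   is impossible at a maximal component of v unless v = 0. This contradicts Q(p(\<lambda>n)) \<noteq> 1. *)

theory Submission
  imports Defs
begin

lemma mp_factor_bounds:
  fixes q u w :: real
  assumes "0 \<le> q" "q \<le> 1" "0 \<le> u" "u \<le> w" "w \<le> 1"
  shows "0 \<le> 1 - q + q * u" "1 - q + q * u \<le> 1 - q + q * w" "1 - q + q * w \<le> 1"
    and "0 \<le> 1 - q + q * w"
proof -
  have "q * u \<le> q * w" "q * w \<le> q" "0 \<le> q * u"
    using assms by (auto intro: mult_left_mono mult_left_le)
  then show "0 \<le> 1 - q + q * u" "1 - q + q * u \<le> 1 - q + q * w" "1 - q + q * w \<le> 1"
    and "0 \<le> 1 - q + q * w"
    using assms by linarith+
qed

lemma F_mp_bounds_mono:
  assumes pv: "\<forall>e\<in>E. pv e \<in> {0..1}"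
    and uw: "\<And>e. 0 \<le> u e" "\<And>e. u e \<le> w e" "\<And>e. w e \<le> 1"
  shows "0 \<le> F_mp E pv u x" "F_mp E pv u x \<le> F_mp E pv w x" "F_mp E pv w x \<le> 1"
proof -
  obtain j i where x: "x = (j, i)" by fastforce
  let ?f = "\<lambda>y k. 1 - pv (k, j) + pv (k, j) * y (k, j)"
  have "0 \<le> ?f u k" "?f u k \<le> ?f w k" "0 \<le> ?f w k" "?f w k \<le> 1" if "k \<in> {k. (k, j) \<in> E} - {i}" for k
    using that pv uw mp_factor_bounds[of "pv (k, j)" "u (k, j)" "w (k, j)"] by auto
  then show "0 \<le> F_mp E pv u x" "F_mp E pv u x \<le> F_mp E pv w x" "F_mp E pv w x \<le> 1"
    unfolding F_mp_def x prod.case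
    by (auto intro!: prod_nonneg prod_mono prod_le_1 intro: order.trans)
qed

lemma F_mp_iterate_bounds:
  assumes pv: "\<forall>e\<in>E. pv e \<in> {0..1}"
  defines "y \<equiv> \<lambda>k. (F_mp E pv ^^ k) (\<lambda>_. 0)"
  shows "0 \<le> y k e \<and> y k e \<le> y (Suc k) e \<and> y (Suc k) e \<le> 1"
proof (induction k arbitrary: e)
  case 0
  show ?case
    using F_mp_bounds_mono[OF pv, of "\<lambda>_. 0" "\<lambda>_. 0"] by (simp add: y_def)
next
  case (Suc k)
  have "y (Suc (Suc k)) = F_mp E pv (y (Suc k))" "y (Suc k) = F_mp E pv (y k)"
    by (simp_all add: y_def)
  then show ?case
    using F_mp_bounds_mono[OF pv, of "y k" "y (Suc k)"] Suc by (metis order.trans)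
qed

lemma F_mp_iterate_tendsto_Q_mp:
  assumes pv: "\<forall>e\<in>E. pv e \<in> {0..1}"
  shows "(\<lambda>k. (F_mp E pv ^^ k) (\<lambda>_. 0) e) \<longlonglongrightarrow> Q_mp E pv e"
proof -
  note bounds = F_mp_iterate_bounds[OF pv]
  have "incseq (\<lambda>k. (F_mp E pv ^^ k) (\<lambda>_. 0) e)"
    using bounds by (intro incseq_SucI) blast
  moreover have "(F_mp E pv ^^ k) (\<lambda>_. 0) e \<le> 1" for k
    using bounds by (meson order.trans)
  ultimately have "convergent (\<lambda>k. (F_mp E pv ^^ k) (\<lambda>_. 0) e)"
    using incseq_convergent convergentI by metis
  then show ?thesis
    unfolding Q_mp_def by (simp add: convergent_LIMSEQ_iff)
qed

lemma Q_mp_bounds: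
  assumes "\<forall>e\<in>E. pv e \<in> {0..1}"
  shows "0 \<le> Q_mp E pv e" "Q_mp E pv e \<le> 1"
proof -
  note bounds = F_mp_iterate_bounds[OF assms] and conv = F_mp_iterate_tendsto_Q_mp[OF assms]
  show "0 \<le> Q_mp E pv e"
    using bounds by (intro LIMSEQ_le_const[OF conv]) blast
  show "Q_mp E pv e \<le> 1"
    using bounds by (intro LIMSEQ_le_const2[OF conv]) (meson order.trans)
qed

lemma finite_predecessors: "finite E \<Longrightarrow> finite {k. (k, j) \<in> E}"
  by (rule finite_subset[of _ "fst ` E"]) force+

lemma Q_mp_fixpoint:
  assumes fin: "finite E" and pv: "\<forall>e\<in>E. pv e \<in> {0..1}"
  shows "F_mp E pv (Q_mp E pv) = Q_mp E pv"
proof -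
  have "F_mp E pv (Q_mp E pv) (j, i) = Q_mp E pv (j, i)" for j i
  proof -
    define y where "y k = (F_mp E pv ^^ k) (\<lambda>_. 0)" for k
    have conv: "(\<lambda>k. y k e) \<longlonglongrightarrow> Q_mp E pv e" for e
      unfolding y_def by (rule F_mp_iterate_tendsto_Q_mp[OF pv])
    have "(\<lambda>k. F_mp E pv (y k) (j, i)) \<longlonglongrightarrow> F_mp E pv (Q_mp E pv) (j, i)"
      unfolding F_mp_def prod.case using finite_predecessors[OF fin]
      by (intro tendsto_prod tendsto_intros conv)
    moreover have "(\<lambda>k. F_mp E pv (y k) (j, i)) \<longlonglongrightarrow> Q_mp E pv (j, i)"
      using LIMSEQ_Suc[OF conv[of "(j, i)"]] by (simp add: y_def)
    ultimately show ?thesis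
      by (rule LIMSEQ_unique)
  qed
  then show ?thesis by (intro ext) (metis surj_pair)
qed

lemma one_minus_prod_le_sum:
  fixes x :: "'a \<Rightarrow> real"
  assumes "finite S" "\<And>k. k \<in> S \<Longrightarrow> 0 \<le> x k \<and> x k \<le> 1"
  shows "1 - (\<Prod>k\<in>S. 1 - x k) \<le> (\<Sum>k\<in>S. x k)"
  using assms
proof (induction S rule: finite_induct)
  case empty
  then show ?case by simp
next
  case (insert a S)
  let ?P = "\<Prod>k\<in>S. 1 - x k"
  have P: "0 \<le> ?P" "?P \<le> 1" using insert by (auto intro: prod_nonneg prod_le_1)
  have xa: "0 \<le> x a" "x a \<le> 1" using insert by auto
  have "1 - (1 - x a) * ?P = (1 - ?P) + x a * ?P" by (simp add: algebra_simps)
  also have "\<dots> \<le> (\<Sum>k\<in>S. x k) + x a"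
    using insert P xa by (intro add_mono) (auto intro: mult_left_le)
  finally show ?case using insert by simp
qed

lemma
  assumes "finite E"
  shows distinct_edge_list: "distinct (edge_list E)" and set_edge_list: "set (edge_list E) = E"
proof -
  have "\<exists>xs. distinct xs \<and> set xs = E" using finite_distinct_list[OF assms] by metis
  then have "distinct (edge_list E) \<and> set (edge_list E) = E"
    unfolding edge_list_def by (rule someI_ex)
  then show "distinct (edge_list E)" "set (edge_list E) = E" by auto
qed

lemma sum_edge_list:
  assumes "finite E"
  shows "(\<Sum>b<length (edge_list E). g (edge_list E ! b)) = (\<Sum>e\<in>E. g e)"
proof -
  have "inj_on (nth (edge_list E)) {..<length (edge_list E)}"
    using distinct_edge_list[OF assms] by (intro inj_on_nth) auto
  moreover have "nth (edge_list E) ` {..<length (edge_list E)} = E"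
    using set_edge_list[OF assms] by (auto simp: set_conv_nth)
  ultimately show ?thesis
    using sum.reindex[of "nth (edge_list E)" "{..<length (edge_list E)}" g] by simp
qed

definition mp_jacobian :: "('v \<times> 'v) set \<Rightarrow> ('v \<times> 'v \<Rightarrow> real) \<Rightarrow> real mat" where
  "mp_jacobian E pv = transpose_mat (hashimoto E) * diag_edges E pv"

lemma rho_B_mp_jacobian:
  "rho_B E pv = spectral_radius (map_mat complex_of_real (mp_jacobian E pv))"
  unfolding rho_B_def mp_jacobian_def ..

lemma mp_jacobian_carrier:
  "mp_jacobian E pv \<in> carrier_mat (length (edge_list E)) (length (edge_list E))"
  unfolding mp_jacobian_def hashimoto_def diag_edges_def Let_def by auto

lemma mp_jacobian_entry:
  assumes "a < length (edge_list E)" "b < length (edge_list E)"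
  shows "mp_jacobian E pv $$ (a, b) =
    (if snd (edge_list E ! b) = fst (edge_list E ! a) \<and> fst (edge_list E ! b) \<noteq> snd (edge_list E ! a)
     then pv (edge_list E ! b) else 0)"
proof -
  let ?es = "edge_list E"
  let ?H = "\<lambda>c. (case ?es ! c of (i, j) \<Rightarrow> case ?es ! a of (k, l) \<Rightarrow>
                    if j = k \<and> i \<noteq> l then 1 else (0::real))"
  have "mp_jacobian E pv $$ (a, b) =
      (\<Sum>c<length ?es. ?H c * (if c = b then pv (?es ! c) else 0))"
    using assms unfolding mp_jacobian_def hashimoto_def diag_edges_def Let_def
    by (simp add: scalar_prod_def atLeast0LessThan)
  also have "\<dots> = ?H b * pv (?es ! b)"
    using assms by (simp add: if_distrib cong: if_cong)
  finally show ?thesis by (auto split: prod.splits)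
qed

lemma mp_jacobian_nonneg:
  assumes "finite E" "\<forall>e\<in>E. pv e \<in> {0..1}" "a < length (edge_list E)" "b < length (edge_list E)"
  shows "0 \<le> mp_jacobian E pv $$ (a, b)"
  using assms nth_mem[of b "edge_list E"] by (auto simp: mp_jacobian_entry set_edge_list)

lemma one_minus_Q_mp_le_mp_jacobian:
  assumes fin: "finite E" and pv: "\<forall>e\<in>E. pv e \<in> {0..1}"
    and a: "a < length (edge_list E)"
  shows "1 - Q_mp E pv (edge_list E ! a) \<le>
    (\<Sum>b<length (edge_list E). mp_jacobian E pv $$ (a, b) * (1 - Q_mp E pv (edge_list E ! b)))"
proof -
  let ?es = "edge_list E" and ?Q = "Q_mp E pv"
  obtain j i where ji: "?es ! a = (j, i)" by fastforce
  let ?S = "{k. (k, j) \<in> E} - {i}"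
  have "?Q (?es ! a) = F_mp E pv ?Q (j, i)" using Q_mp_fixpoint[OF fin pv] ji by simp
  also have "\<dots> = (\<Prod>k\<in>?S. 1 - pv (k, j) * (1 - ?Q (k, j)))"
    unfolding F_mp_def by (simp add: algebra_simps)
  finally have "1 - ?Q (?es ! a) \<le> (\<Sum>k\<in>?S. pv (k, j) * (1 - ?Q (k, j)))"
    using finite_predecessors[OF fin, of j] pv Q_mp_bounds[OF pv]
    by (auto intro!: one_minus_prod_le_sum mult_le_one)
  also have "\<dots> = (\<Sum>e\<in>{e\<in>E. snd e = j \<and> fst e \<noteq> i}. pv e * (1 - ?Q e))"
  proof -
    have inj: "inj_on (\<lambda>k. (k, j)) ?S" by (auto simp: inj_on_def)
    have "(\<lambda>k. (k, j)) ` ?S = {e\<in>E. snd e = j \<and> fst e \<noteq> i}" by force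
    then show ?thesis using sum.reindex[OF inj, of "\<lambda>e. pv e * (1 - ?Q e)"] by simp
  qed
  also have "\<dots> = (\<Sum>e\<in>E. if snd e = j \<and> fst e \<noteq> i then pv e * (1 - ?Q e) else 0)"
    by (rule sum.inter_filter[OF fin])
  also have "\<dots> = (\<Sum>b<length ?es. mp_jacobian E pv $$ (a, b) * (1 - ?Q (?es ! b)))"
    unfolding sum_edge_list[OF fin, symmetric] using a ji
    by (intro sum.cong) (auto simp: mp_jacobian_entry)
  finally show ?thesis .
qed

lemma mult_mat_entry:
  fixes A B :: "'a::comm_semiring_0 mat"
  assumes "A \<in> carrier_mat n n" "B \<in> carrier_mat n n" "a < n" "b < n"
  shows "(A * B) $$ (a, b) = (\<Sum>c<n. A $$ (a, c) * B $$ (c, b))"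
  using assms by (simp add: scalar_prod_def atLeast0LessThan)

lemma pow_mat_nonneg:
  fixes A :: "real mat"
  assumes A: "A \<in> carrier_mat n n" and nonneg: "\<forall>a<n. \<forall>b<n. 0 \<le> A $$ (a, b)"
  shows "a < n \<Longrightarrow> b < n \<Longrightarrow> 0 \<le> (A ^\<^sub>m k) $$ (a, b)"
proof (induction k arbitrary: b)
  case 0
  then show ?case using A by simp
next
  case (Suc k)
  have "(A ^\<^sub>m Suc k) $$ (a, b) = (\<Sum>c<n. (A ^\<^sub>m k) $$ (a, c) * A $$ (c, b))"
    using Suc.prems by (simp add: mult_mat_entry[OF pow_carrier_mat[OF A] A])
  also have "\<dots> \<ge> 0" using Suc nonneg by (intro sum_nonneg mult_nonneg_nonneg) auto
  finally show ?case .
qed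

lemma pow_mat_subsolution:
  fixes A :: "real mat"
  assumes A: "A \<in> carrier_mat n n" and nonneg: "\<forall>a<n. \<forall>b<n. 0 \<le> A $$ (a, b)"
    and sub: "\<forall>a<n. v a \<le> (\<Sum>b<n. A $$ (a, b) * v b)"
  shows "a < n \<Longrightarrow> v a \<le> (\<Sum>b<n. (A ^\<^sub>m k) $$ (a, b) * v b)"
proof (induction k arbitrary: a)
  case 0
  have "(\<Sum>b<n. (A ^\<^sub>m 0) $$ (a, b) * v b) = (\<Sum>b<n. if a = b then v b else 0)"
    using A 0 by (intro sum.cong) auto
  then show ?case using 0 by simp
next
  case (Suc k)
  let ?P = "A ^\<^sub>m k"
  have "v a \<le> (\<Sum>c<n. ?P $$ (a, c) * v c)" using Suc by simp
  also have "\<dots> \<le> (\<Sum>c<n. ?P $$ (a, c) * (\<Sum>b<n. A $$ (c, b) * v b))"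
    using sub pow_mat_nonneg[OF A nonneg Suc.prems] by (intro sum_mono mult_left_mono) auto
  also have "\<dots> = (\<Sum>c<n. \<Sum>b<n. ?P $$ (a, c) * (A $$ (c, b) * v b))"
    by (simp only: sum_distrib_left)
  also have "\<dots> = (\<Sum>b<n. \<Sum>c<n. ?P $$ (a, c) * (A $$ (c, b) * v b))"
    by (rule sum.swap)
  also have "\<dots> = (\<Sum>b<n. (\<Sum>c<n. ?P $$ (a, c) * A $$ (c, b)) * v b)"
    by (simp only: sum_distrib_right mult.assoc)
  also have "\<dots> = (\<Sum>b<n. (A ^\<^sub>m Suc k) $$ (a, b) * v b)"
    using Suc.prems by (simp add: mult_mat_entry[OF pow_carrier_mat[OF A] A])
  finally show ?case .
qed

lemma pow_mat_entry_tendsto: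
  fixes X :: "nat \<Rightarrow> real mat"
  assumes X: "\<And>i. X i \<in> carrier_mat n n" and Y: "Y \<in> carrier_mat n n"
    and lim: "\<forall>a<n. \<forall>b<n. (\<lambda>i. X i $$ (a, b)) \<longlonglongrightarrow> Y $$ (a, b)"
  shows "a < n \<Longrightarrow> b < n \<Longrightarrow> (\<lambda>i. (X i ^\<^sub>m k) $$ (a, b)) \<longlonglongrightarrow> (Y ^\<^sub>m k) $$ (a, b)"
proof (induction k arbitrary: b)
  case 0
  have "dim_row (X i) = n" for i using X by blast
  then show ?case using Y 0 by simp
next
  case (Suc k)
  have "(\<lambda>i. \<Sum>c<n. (X i ^\<^sub>m k) $$ (a, c) * X i $$ (c, b))
      \<longlonglongrightarrow> (\<Sum>c<n. (Y ^\<^sub>m k) $$ (a, c) * Y $$ (c, b))"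
    using Suc lim by (intro tendsto_sum tendsto_mult) auto
  then show ?case
    using Suc.prems by (simp add: mult_mat_entry[OF pow_carrier_mat[OF X] X]
        mult_mat_entry[OF pow_carrier_mat[OF Y] Y])
qed

lemma pow_mat_smult:
  assumes A: "A \<in> carrier_mat n n"
  shows "(k \<cdot>\<^sub>m A) ^\<^sub>m i = ((k::'a::comm_ring_1) ^ i) \<cdot>\<^sub>m (A ^\<^sub>m i)"
proof (induction i)
  case 0
  then show ?case using A by (auto intro!: eq_matI)
next
  case (Suc i)
  have "(k \<cdot>\<^sub>m A) ^\<^sub>m Suc i = (k ^ i) \<cdot>\<^sub>m (A ^\<^sub>m i) * (k \<cdot>\<^sub>m A)" using Suc by simp
  also have "\<dots> = (k ^ i) \<cdot>\<^sub>m (A ^\<^sub>m i * (k \<cdot>\<^sub>m A))"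
    using A by (intro mult_smult_assoc_mat[of _ n n]) auto
  also have "\<dots> = (k ^ i) \<cdot>\<^sub>m (k \<cdot>\<^sub>m (A ^\<^sub>m i * A))"
    using A by (subst mult_smult_distrib[of _ n n]) auto
  also have "\<dots> = (k ^ Suc i) \<cdot>\<^sub>m (A ^\<^sub>m Suc i)" by (intro eq_matI) (auto simp: ac_simps)
  finally show ?case .
qed

lemma eigenvalue_smult_mat:
  fixes A :: "'a::field mat"
  assumes A: "A \<in> carrier_mat n n" and k: "k \<noteq> 0" and ev: "eigenvalue (k \<cdot>\<^sub>m A) \<mu>"
  shows "eigenvalue A (\<mu> / k)"
proof -
  obtain v where v: "v \<in> carrier_vec n" "v \<noteq> 0\<^sub>v n" "(k \<cdot>\<^sub>m A) *\<^sub>v v = \<mu> \<cdot>\<^sub>v v"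
    using ev A unfolding eigenvalue_def eigenvector_def by auto
  have "A *\<^sub>v v = (\<mu> / k) \<cdot>\<^sub>v v"
  proof (rule eq_vecI)
    fix i
    assume "i < dim_vec ((\<mu> / k) \<cdot>\<^sub>v v)"
    then have i: "i < n" using v by simp
    have "((k \<cdot>\<^sub>m A) *\<^sub>v v) $ i = (\<mu> \<cdot>\<^sub>v v) $ i" using v(3) by simp
    then have "k * (A *\<^sub>v v) $ i = \<mu> * v $ i"
      using i A v(1) by (simp add: scalar_prod_def sum_distrib_left ac_simps)
    then show "(A *\<^sub>v v) $ i = ((\<mu> / k) \<cdot>\<^sub>v v) $ i"
      using i v k by (simp add: field_simps)
  qed (use A v in auto)
  then show ?thesis using v A unfolding eigenvalue_def eigenvector_def by auto
qed

lemma spectral_radius_smult_le: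
  assumes A: "A \<in> carrier_mat n n" and n: "n > 0" and k: "k \<noteq> 0"
  shows "spectral_radius (k \<cdot>\<^sub>m A) \<le> norm k * spectral_radius A"
proof -
  obtain \<mu> where "\<mu> \<in> spectrum (k \<cdot>\<^sub>m A)" and \<mu>: "spectral_radius (k \<cdot>\<^sub>m A) = norm \<mu>"
    using spectral_radius_mem_max(1)[of "k \<cdot>\<^sub>m A" n] A n by auto
  then have "\<mu> / k \<in> spectrum A"
    using eigenvalue_smult_mat[OF A k] unfolding spectrum_def by auto
  then have "norm (\<mu> / k) \<le> spectral_radius A"
    using spectral_radius_mem_max(2)[OF A n] by auto
  then show ?thesis using k \<mu> by (simp add: norm_divide field_simps)
qed

text \<open>The Jordan normal form only bounds the powers of a matrix of spectral radius
  below \<open>1\<close>; applying this bound to \<open>s A\<close> for some \<open>s > 1\<close> with \<open>s \<rho>(A) < 1\<close>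
  yields geometric decay.\<close>

lemma spectral_radius_less_1_pow_tendsto_zero:
  fixes C :: "complex mat"
  assumes C: "C \<in> carrier_mat n n" and sr: "spectral_radius C < 1" and ab: "a < n" "b < n"
  shows "(\<lambda>k. (C ^\<^sub>m k) $$ (a, b)) \<longlonglongrightarrow> 0"
proof -
  have n: "n > 0" using ab by simp
  define s where "s = 2 / (1 + spectral_radius C)"
  have "0 \<le> spectral_radius C"
    using spectral_radius_mem_max(1)[OF C n] by auto
  then have s: "s > 1" "s * spectral_radius C < 1"
    using sr unfolding s_def by (auto simp: field_simps)
  define D where "D = complex_of_real s \<cdot>\<^sub>m C"
  have D: "D \<in> carrier_mat n n" using C unfolding D_def by simp
  have "spectral_radius D < 1"
    using spectral_radius_smult_le[OF C n, of "complex_of_real s"] s unfolding D_def by simp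
  then obtain c where c: "\<forall>k. norm_bound (D ^\<^sub>m k) c"
    using spectral_radius_jnf_norm_bound_less_1_upper_triangular[OF D] by auto
  have "norm ((C ^\<^sub>m k) $$ (a, b)) \<le> c * (1 / s) ^ k" for k
  proof -
    have "(D ^\<^sub>m k) $$ (a, b) = complex_of_real s ^ k * (C ^\<^sub>m k) $$ (a, b)"
      using C ab unfolding D_def by (simp add: pow_mat_smult[OF C])
    moreover have "norm ((D ^\<^sub>m k) $$ (a, b)) \<le> c"
      using c ab D unfolding norm_bound_def by auto
    ultimately have "s ^ k * norm ((C ^\<^sub>m k) $$ (a, b)) \<le> c"
      using s by (simp add: norm_mult norm_power)
    then have "norm ((C ^\<^sub>m k) $$ (a, b)) \<le> c / s ^ k"
      using s by (simp add: pos_le_divide_eq mult.commute)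
    then show ?thesis by (simp add: power_one_over)
  qed
  moreover have "(\<lambda>k. c * (1 / s) ^ k) \<longlonglongrightarrow> 0"
    using s by (intro tendsto_mult_right_zero LIMSEQ_power_zero) simp
  ultimately have "(\<lambda>k. norm ((C ^\<^sub>m k) $$ (a, b))) \<longlonglongrightarrow> 0"
    by (auto intro: tendsto_sandwich[of "\<lambda>_. 0" _ _ "\<lambda>k. c * (1 / s) ^ k"])
  then show ?thesis by (rule tendsto_norm_zero_cancel)
qed

lemma eventually_all_entries:
  fixes n :: nat
  assumes "\<And>a b. a < n \<Longrightarrow> b < n \<Longrightarrow> eventually (P a b) F"
  shows "eventually (\<lambda>x. \<forall>a<n. \<forall>b<n. P a b x) F"
proof -
  have "eventually (\<lambda>x. \<forall>a\<in>{..<n}. \<forall>b\<in>{..<n}. P a b x) F"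
    using assms by (intro eventually_ball_finite ballI) auto
  then show ?thesis by (rule eventually_mono) simp
qed

lemma spectral_radius_less_1_pow_entries_eventually_less:
  fixes A :: "real mat"
  assumes A: "A \<in> carrier_mat n n" and sr: "spectral_radius (map_mat complex_of_real A) < 1"
    and c: "c > 0"
  shows "\<forall>\<^sub>F k in sequentially. \<forall>a<n. \<forall>b<n. (A ^\<^sub>m k) $$ (a, b) < c"
proof (rule eventually_all_entries)
  fix a b
  assume ab: "a < n" "b < n"
  have "(\<lambda>k. complex_of_real ((A ^\<^sub>m k) $$ (a, b))) \<longlonglongrightarrow> 0"
    using spectral_radius_less_1_pow_tendsto_zero[of _ n, OF _ sr ab] A ab
    by (simp add: of_real_hom.mat_hom_pow[OF A, symmetric])
  then have "(\<lambda>k. (A ^\<^sub>m k) $$ (a, b)) \<longlonglongrightarrow> 0"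
    by (metis of_real_0 tendsto_of_real_iff)
  then show "\<forall>\<^sub>F k in sequentially. (A ^\<^sub>m k) $$ (a, b) < c"
    using c by (rule order_tendstoD(2))
qed

lemma mp_jacobian_entry_tendsto:
  assumes fin: "finite E" and lim: "\<forall>e\<in>E. (\<lambda>i. pv i e) \<longlonglongrightarrow> q e"
    and ab: "a < length (edge_list E)" "b < length (edge_list E)"
  shows "(\<lambda>i. mp_jacobian E (pv i) $$ (a, b)) \<longlonglongrightarrow> mp_jacobian E q $$ (a, b)"
proof -
  let ?es = "edge_list E"
  show ?thesis
  proof (cases "snd (?es ! b) = fst (?es ! a) \<and> fst (?es ! b) \<noteq> snd (?es ! a)")
    case True
    have "?es ! b \<in> E" using ab set_edge_list[OF fin] by auto
    then show ?thesis using lim unfolding mp_jacobian_entry[OF ab] if_P[OF True] by blast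
  next
    case False
    then show ?thesis unfolding mp_jacobian_entry[OF ab] if_not_P[OF False] by simp
  qed
qed

lemma subsolution_eq_zero_if_small_entries:
  fixes B :: "real mat"
  assumes nonneg: "\<forall>a<n. \<forall>b<n. 0 \<le> B $$ (a, b)"
    and small: "\<forall>a<n. \<forall>b<n. B $$ (a, b) < 1 / n"
    and v: "\<forall>b<n. 0 \<le> v b" and sub: "\<forall>a<n. v a \<le> (\<Sum>b<n. B $$ (a, b) * v b)"
    and a0: "a0 < n"
  shows "v a0 = 0"
proof (rule ccontr)
  assume "v a0 \<noteq> 0"
  obtain a where a: "a < n" and max: "\<And>b. b < n \<Longrightarrow> v b \<le> v a"
    using a0 Max_in[of "v ` {..<n}"] Max_ge[of "v ` {..<n}"] by fastforce
  have pos: "v a > 0" using \<open>v a0 \<noteq> 0\<close> v a0 max[OF a0] by fastforce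
  have "v a \<le> (\<Sum>b<n. B $$ (a, b) * v b)" using sub a by simp
  also have "\<dots> \<le> (\<Sum>b<n. B $$ (a, b) * v a)"
    using nonneg max a by (intro sum_mono mult_left_mono) auto
  also have "\<dots> < (\<Sum>b<n. 1 / n * v a)"
    using small a pos a0 by (intro sum_strict_mono mult_strict_right_mono) auto
  also have "\<dots> = v a" using a0 by simp
  finally show False by simp
qed

lemma Q_mp_eq_one_if_small_jacobian_power:
  assumes fin: "finite E" and pv: "\<forall>e\<in>E. pv e \<in> {0..1}"
    and small: "\<forall>a<length (edge_list E). \<forall>b<length (edge_list E).
      (mp_jacobian E pv ^\<^sub>m K) $$ (a, b) < 1 / length (edge_list E)"
    and e: "e \<in> E"
  shows "Q_mp E pv e = 1"
proof -
  let ?es = "edge_list E"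
  define v where "v b = 1 - Q_mp E pv (?es ! b)" for b
  note J = mp_jacobian_carrier[of E pv] and J_nonneg = mp_jacobian_nonneg[OF fin pv]
  obtain a where a: "a < length ?es" "?es ! a = e"
    using e set_edge_list[OF fin] by (metis in_set_conv_nth)
  have "\<forall>a<length ?es. v a \<le> (\<Sum>b<length ?es. mp_jacobian E pv $$ (a, b) * v b)"
    unfolding v_def using one_minus_Q_mp_le_mp_jacobian[OF fin pv] by blast
  then have "\<forall>a<length ?es. v a \<le> (\<Sum>b<length ?es. (mp_jacobian E pv ^\<^sub>m K) $$ (a, b) * v b)"
    using pow_mat_subsolution[OF J] J_nonneg by blast
  moreover have "\<forall>b<length ?es. 0 \<le> v b" using Q_mp_bounds(2)[OF pv] unfolding v_def by simp
  moreover have "\<forall>a<length ?es. \<forall>b<length ?es. 0 \<le> (mp_jacobian E pv ^\<^sub>m K) $$ (a, b)"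
    using pow_mat_nonneg[OF J] J_nonneg by blast
  ultimately have "v a = 0"
    using subsolution_eq_zero_if_small_entries[OF _ small _ _ a(1)] by blast
  then show ?thesis using a unfolding v_def by simp
qed

theorem lemma2:
  fixes V :: "'v set" and E :: "('v \<times> 'v) set"
    and p :: "real \<Rightarrow> ('v \<times> 'v) \<Rightarrow> real"
    and lc :: real and lam :: "nat \<Rightarrow> real"
  assumes "finite V" and "E \<subseteq> V \<times> V"
    and p_range: "\<forall>l \<in> {0..1}. \<forall>e \<in> E. p l e \<in> {0..1}"
    and p_cont: "\<forall>e \<in> E. continuous_on {0..1} (\<lambda>l. p l e)"
    and lc: "lc \<in> {0..<1}"
    and Q_lim: "\<forall>e \<in> E. ((\<lambda>l. Q_mp E (p l) e) \<longlongrightarrow> 1) (at lc within {0..1})"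
    and lam_range: "\<forall>n. lam n \<in> {0..1}"
    and lam_lim: "lam \<longlonglongrightarrow> lc"
    and lam_Q: "\<forall>n. \<exists>e \<in> E. Q_mp E (p (lam n)) e \<noteq> 1"
  shows "rho_B E (p lc) \<ge> 1"
proof (rule ccontr)
  assume "\<not> rho_B E (p lc) \<ge> 1"
  then have sr: "spectral_radius (map_mat complex_of_real (mp_jacobian E (p lc))) < 1"
    by (simp add: rho_B_mp_jacobian)
  have fin: "finite E" using assms(1,2) by (metis finite_SigmaI finite_subset)
  define m where "m = length (edge_list E)"
  define J where "J l = mp_jacobian E (p l)" for l
  have J: "J l \<in> carrier_mat m m" for l unfolding J_def m_def by (rule mp_jacobian_carrier)
  have "m > 0" using lam_Q set_edge_list[OF fin] unfolding m_def by fastforce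
  then have "\<forall>\<^sub>F k in sequentially. \<forall>a<m. \<forall>b<m. (J lc ^\<^sub>m k) $$ (a, b) < 1 / m"
    using sr by (intro spectral_radius_less_1_pow_entries_eventually_less J) (simp_all add: J_def)
  then obtain K where K: "\<forall>a<m. \<forall>b<m. (J lc ^\<^sub>m K) $$ (a, b) < 1 / m"
    by (auto simp: eventually_sequentially)
  have "(\<lambda>n. p (lam n) e) \<longlonglongrightarrow> p lc e" if "e \<in> E" for e
    using p_cont that lam_range lc
    by (intro continuous_on_tendsto_compose[OF _ lam_lim, of "{0..1}"]) auto
  then have "\<forall>a<m. \<forall>b<m. (\<lambda>n. J (lam n) $$ (a, b)) \<longlonglongrightarrow> J lc $$ (a, b)"
    unfolding J_def m_def by (simp add: mp_jacobian_entry_tendsto[OF fin])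
  then have "\<forall>\<^sub>F n in sequentially. \<forall>a<m. \<forall>b<m. (J (lam n) ^\<^sub>m K) $$ (a, b) < 1 / m"
    using K by (auto intro!: eventually_all_entries order_tendstoD(2)[OF pow_mat_entry_tendsto[OF J J]])
  then obtain n where "\<forall>a<m. \<forall>b<m. (J (lam n) ^\<^sub>m K) $$ (a, b) < 1 / m"
    by (auto simp: eventually_sequentially)
  then have "\<forall>e\<in>E. Q_mp E (p (lam n)) e = 1"
    using Q_mp_eq_one_if_small_jacobian_power[OF fin] p_range lam_range
    unfolding J_def m_def by blast
  with lam_Q show False by blast
qed

end
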